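(* Let $D$ be a 2-connected rooted digraph with root $r$, and let $l$ be the number of vertices of $D$ of indegree at least 3. Then $\mathrm{maxleaf}(D)\ge\frac{l}{6}$.
   Context: A rooted digraph is a loopless digraph $D$ with a distinguished vertex $r$ (the root) such that: there is no arc $(u,r)$ for any $u\in V(D)$; there is no arc $(x,y)$ with $x\neq r$ and $y$ an outneighbour of $r$; and $r$ has outdegree at least 2. A cut of $D$ is a set $S\subseteq V(D)\setminus\{r\}$ such that some vertex $z\notin S$ is not the endpoint of any directed path starting at $r$ in $D-S$; $D$ is 2-connected if it has no cut of size at most 1. An outbranching of $D$ is a spanning subdigraph which is a directed tree rooted at $r$ with all arcs directed away from $r$; its leaves are the vertices of outdegree 0 in it. $\mathrm{maxleaf}(D)$ denotes the maximum number of leaves of an outbranching of $D$. *)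

theory Defs
  imports Complex_Main
begin

definition out_nbrs :: "('a \<times> 'a) set \<Rightarrow> 'a \<Rightarrow> 'a set" where
  "out_nbrs A x = {y. (x, y) \<in> A}"

definition indegree :: "('a \<times> 'a) set \<Rightarrow> 'a \<Rightarrow> nat" where
  "indegree A v = card {u. (u, v) \<in> A}"

definition rooted_digraph :: "'a set \<Rightarrow> ('a \<times> 'a) set \<Rightarrow> 'a \<Rightarrow> bool" where
  "rooted_digraph V A r \<longleftrightarrow>
     finite V \<and> A \<subseteq> V \<times> V \<and> (\<forall>x. (x, x) \<notin> A) \<and> r \<in> V \<and>
     (\<forall>u. (u, r) \<notin> A) \<and>
     (\<forall>x y. (x, y) \<in> A \<and> x \<noteq> r \<longrightarrow> y \<notin> out_nbrs A r) \<and>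
     card (out_nbrs A r) \<ge> 2"

definition reach_avoiding :: "'a set \<Rightarrow> ('a \<times> 'a) set \<Rightarrow> 'a \<Rightarrow> 'a set \<Rightarrow> 'a set" where
  "reach_avoiding V A r S = {z. (r, z) \<in> (A \<inter> ((V - S) \<times> (V - S)))\<^sup>*}"

definition is_cut :: "'a set \<Rightarrow> ('a \<times> 'a) set \<Rightarrow> 'a \<Rightarrow> 'a set \<Rightarrow> bool" where
  "is_cut V A r S \<longleftrightarrow> S \<subseteq> V - {r} \<and> (\<exists>z \<in> V - S. z \<notin> reach_avoiding V A r S)"

definition two_connected :: "'a set \<Rightarrow> ('a \<times> 'a) set \<Rightarrow> 'a \<Rightarrow> bool" where
  "two_connected V A r \<longleftrightarrow> (\<forall>S. card S \<le> 1 \<longrightarrow> \<not> is_cut V A r S)"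

definition outbranching :: "'a set \<Rightarrow> ('a \<times> 'a) set \<Rightarrow> 'a \<Rightarrow> ('a \<times> 'a) set \<Rightarrow> bool" where
  "outbranching V A r B \<longleftrightarrow>
     B \<subseteq> A \<and> indegree B r = 0 \<and> (\<forall>v \<in> V - {r}. indegree B v = 1) \<and>
     (\<forall>v \<in> V. (r, v) \<in> B\<^sup>*)"

definition leaves :: "'a set \<Rightarrow> ('a \<times> 'a) set \<Rightarrow> 'a set" where
  "leaves V B = {v \<in> V. out_nbrs B v = {}}"

definition maxleaf :: "'a set \<Rightarrow> ('a \<times> 'a) set \<Rightarrow> 'a \<Rightarrow> nat" where
  "maxleaf V A r = Max {card (leaves V B) | B. outbranching V A r B}"

end

theory Submission
  imports Defs
begin

text \<open>
  Give the root \<open>r\<close> a twin with the same out-neighbours and no in-arcs. In the resulting digraph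
  with two roots, deleting any vertex leaves every other vertex reachable from one of the roots.
  Contracting suitable out-arcs of \<open>r\<close> one at a time, this yields a numbering with \<open>r\<close> first, the
  twin last, and every vertex not adjacent from \<open>r\<close> having an in-neighbour before it and one after
  it. Read forwards and backwards, the numbering gives two orders in which every vertex other
  than \<open>r\<close> has an earlier in-neighbour, and every vertex of indegree at least 3 has two earlier
  in-neighbours in one of them. In either order, let each vertex pick its parent among its
  earlier in-neighbours; by the Caro-Wei bound the parents can be chosen so that at least \<open>|M|/3\<close>
  vertices are never picked, where \<open>M\<close> is the set of vertices with two earlier in-neighbours.
  Hence \<open>l \<le> |M| + |M'| \<le> 6 maxleaf(D)\<close>.
\<close>

definition arcs_avoiding :: "'a set \<Rightarrow> ('a \<times> 'a) set \<Rightarrow> 'a set \<Rightarrow> ('a \<times> 'a) set" where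
  "arcs_avoiding V A Z = A \<inter> ((V - Z) \<times> (V - Z))"

lemma reach_avoiding_iff: "z \<in> reach_avoiding V A r S \<longleftrightarrow> (r, z) \<in> (arcs_avoiding V A S)\<^sup>*"
  unfolding reach_avoiding_def arcs_avoiding_def by simp

lemma rtrancl_arcs_avoiding_antimono:
  assumes "Z \<subseteq> Z'" and "(a, b) \<in> (arcs_avoiding V A Z')\<^sup>*"
  shows "(a, b) \<in> (arcs_avoiding V A Z)\<^sup>*"
proof -
  have "arcs_avoiding V A Z' \<subseteq> arcs_avoiding V A Z"
    using assms(1) unfolding arcs_avoiding_def by auto
  then show ?thesis using assms(2) rtrancl_mono by blast
qed

lemma rtrancl_arcs_avoiding_target:
  "(a, b) \<in> (arcs_avoiding V A Z)\<^sup>* \<Longrightarrow> b = a \<or> b \<in> V - Z"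
  by (erule rtranclE) (auto simp: arcs_avoiding_def)

lemma rtrancl_arcs_avoiding_image:
  assumes "(a, b) \<in> (arcs_avoiding V A Z)\<^sup>*" and "g ` V \<subseteq> V'" and "map_prod g g ` A \<subseteq> A'"
    and "\<forall>w\<in>V. g w \<in> Z' \<longrightarrow> w \<in> Z"
  shows "(g a, g b) \<in> (arcs_avoiding V' A' Z')\<^sup>*"
  using assms(1)
proof (induction rule: rtrancl_induct)
  case (step w w')
  then have "(g w, g w') \<in> arcs_avoiding V' A' Z'"
    using assms(2-4) unfolding arcs_avoiding_def by force
  with step.IH show ?case by (rule rtrancl.rtrancl_into_rtrancl)
qed simp

lemma rtrancl_arcs_avoiding_first_hit:
  assumes "(a, b) \<in> (arcs_avoiding V A Z)\<^sup>*" and "a \<notin> Y"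
  shows "(a, b) \<in> (arcs_avoiding V A (Z \<union> Y))\<^sup>* \<or>
    (\<exists>y\<in>Y. (a, y) \<in> (arcs_avoiding V A (Z \<union> (Y - {y})))\<^sup>*)"
proof -
  have "((a, b) \<in> (arcs_avoiding V A (Z \<union> Y))\<^sup>* \<and> b \<notin> Y) \<or>
    (\<exists>y\<in>Y. (a, y) \<in> (arcs_avoiding V A (Z \<union> (Y - {y})))\<^sup>*)"
    using assms(1)
  proof (induction rule: rtrancl_induct)
    case base
    then show ?case using assms(2) by simp
  next
    case (step w w')
    show ?case
    proof (cases "\<exists>y\<in>Y. (a, y) \<in> (arcs_avoiding V A (Z \<union> (Y - {y})))\<^sup>*")
      case True
      then show ?thesis by blast
    next
      case False
      with step.IH have aw: "(a, w) \<in> (arcs_avoiding V A (Z \<union> Y))\<^sup>*" and "w \<notin> Y" by auto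
      show ?thesis
      proof (cases "w' \<in> Y")
        case True
        have "(a, w) \<in> (arcs_avoiding V A (Z \<union> (Y - {w'})))\<^sup>*"
          by (rule rtrancl_arcs_avoiding_antimono[OF _ aw]) auto
        moreover have "(w, w') \<in> arcs_avoiding V A (Z \<union> (Y - {w'}))"
          using step.hyps(2) \<open>w \<notin> Y\<close> by (auto simp: arcs_avoiding_def)
        ultimately show ?thesis using True by (meson rtrancl.rtrancl_into_rtrancl)
      next
        case False
        then have "(w, w') \<in> arcs_avoiding V A (Z \<union> Y)"
          using step.hyps(2) \<open>w \<notin> Y\<close> by (auto simp: arcs_avoiding_def)
        then show ?thesis using aw False by (meson rtrancl.rtrancl_into_rtrancl)
      qed
    qed
  qed
  then show ?thesis by blast
qed

lemma rtrancl_arcs_avoiding_into_source: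
  assumes "(a, s) \<in> (arcs_avoiding V A Z)\<^sup>*" and "\<forall>u. (u, s) \<notin> A"
  shows "a = s"
  using assms by (auto elim: rtranclE simp: arcs_avoiding_def)

lemma rtrancl_arcs_avoiding_insert_source:
  assumes "\<forall>u. (u, s) \<notin> A" and "(a, b) \<in> (arcs_avoiding V A Z)\<^sup>*" and "a \<noteq> s"
  shows "(a, b) \<in> (arcs_avoiding V A (insert s Z))\<^sup>*"
  using rtrancl_arcs_avoiding_first_hit[OF assms(2), of "{s}"]
    rtrancl_arcs_avoiding_into_source[OF _ assms(1)] assms(3) by auto

lemma rtrancl_arcs_avoiding_insert_or_reach:
  assumes "(a, b) \<in> (arcs_avoiding V A Z)\<^sup>*" and "a \<noteq> y"
  shows "(a, b) \<in> (arcs_avoiding V A (insert y Z))\<^sup>* \<or> (a, y) \<in> (arcs_avoiding V A Z)\<^sup>*"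
  using rtrancl_arcs_avoiding_first_hit[OF assms(1), of "{y}"] assms(2) by auto

lemma rtrancl_arcs_avoiding_one_of_two:
  assumes "(a, x) \<in> (arcs_avoiding V A Z)\<^sup>*" and "a \<noteq> x" and "a \<noteq> y" and "x \<noteq> y"
  shows "(a, x) \<in> (arcs_avoiding V A (insert y Z))\<^sup>* \<or> (a, y) \<in> (arcs_avoiding V A (insert x Z))\<^sup>*"
proof -
  have "(a, x) \<notin> (arcs_avoiding V A (Z \<union> {x, y}))\<^sup>*"
    using rtrancl_arcs_avoiding_target assms(2) by fastforce
  moreover have "Z \<union> ({x, y} - {x}) = insert y Z" "Z \<union> ({x, y} - {y}) = insert x Z"
    using assms(4) by auto
  ultimately show ?thesis
    using rtrancl_arcs_avoiding_first_hit[OF assms(1), of "{x, y}"] assms(2,3) by auto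
qed

definition st_digraph :: "'a set \<Rightarrow> ('a \<times> 'a) set \<Rightarrow> 'a \<Rightarrow> 'a \<Rightarrow> bool" where
  "st_digraph V A s t \<longleftrightarrow> finite V \<and> A \<subseteq> V \<times> V \<and> (\<forall>v. (v, v) \<notin> A) \<and>
     s \<in> V \<and> t \<in> V \<and> s \<noteq> t \<and> (\<forall>u. (u, s) \<notin> A) \<and> (\<forall>u. (u, t) \<notin> A)"

definition st_two_connected :: "'a set \<Rightarrow> ('a \<times> 'a) set \<Rightarrow> 'a \<Rightarrow> 'a \<Rightarrow> bool" where
  "st_two_connected V A s t \<longleftrightarrow>
     (\<forall>v \<in> V - {s, t}. \<forall>z \<in> V - {v}. \<exists>q \<in> {s, t} - {z}. (q, v) \<in> (arcs_avoiding V A {z})\<^sup>*)"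

text \<open>A directed version of the st-numberings of Lempel, Even and Cederbaum.\<close>

definition st_numbering :: "'a set \<Rightarrow> ('a \<times> 'a) set \<Rightarrow> 'a \<Rightarrow> 'a \<Rightarrow> ('a \<Rightarrow> nat) \<Rightarrow> bool" where
  "st_numbering V A s t f \<longleftrightarrow> inj_on f V \<and> (\<forall>v \<in> V - {s}. f s < f v) \<and> (\<forall>v \<in> V - {t}. f v < f t) \<and>
     (\<forall>v \<in> V - {s, t}. \<exists>u w. (u, v) \<in> A \<and> (w, v) \<in> A \<and> f u < f v \<and> f v < f w)"

text \<open>Contracting the arc \<open>(s, x)\<close> into the root \<open>s\<close> leaves the vertex set \<open>V - {x}\<close>.\<close>

definition contract_arc :: "'a set \<Rightarrow> ('a \<times> 'a) set \<Rightarrow> 'a \<Rightarrow> 'a \<Rightarrow> ('a \<times> 'a) set" where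
  "contract_arc V A s x = arcs_avoiding V A {x} \<union> {(s, y) | y. (x, y) \<in> A}"

definition cut_off :: "'a set \<Rightarrow> ('a \<times> 'a) set \<Rightarrow> 'a \<Rightarrow> 'a \<Rightarrow> 'a \<Rightarrow> 'a set" where
  "cut_off V A s t x = {v \<in> V - {s, t, x}. (t, v) \<notin> (arcs_avoiding V A {s, x})\<^sup>*}"

lemma st_two_connectedE:
  assumes "st_two_connected V A s t" and "v \<in> V - {s, t}" and "z \<in> V" and "z \<noteq> v"
  obtains q where "q \<in> {s, t}" and "q \<noteq> z" and "(q, v) \<in> (arcs_avoiding V A {z})\<^sup>*"
  using assms unfolding st_two_connected_def by blast

lemma st_two_connected_reach_from_t:
  assumes "st_two_connected V A s t" and "s \<in> V" and "v \<in> V - {s, t}"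
  shows "(t, v) \<in> (arcs_avoiding V A {s})\<^sup>*"
  using assms unfolding st_two_connected_def by blast

lemma st_two_connected_reach_from_s:
  assumes "st_two_connected V A s t" and "t \<in> V" and "v \<in> V - {s, t}"
  shows "(s, v) \<in> (arcs_avoiding V A {t})\<^sup>*"
  using assms unfolding st_two_connected_def by blast

lemma st_two_connected_in_arc:
  assumes G: "st_digraph V A s t" and C: "st_two_connected V A s t"
    and v: "v \<in> V - {s, t}" and z: "z \<in> {s, t}"
  obtains w where "(w, v) \<in> A" and "w \<noteq> z"
proof -
  have zv: "z \<in> V" "z \<noteq> v"
    using G v z unfolding st_digraph_def by auto
  obtain q where q: "q \<in> {s, t}" "q \<noteq> z" "(q, v) \<in> (arcs_avoiding V A {z})\<^sup>*"
    by (rule st_two_connectedE[OF C v zv])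
  moreover have "q \<noteq> v"
    using v q(1) by auto
  ultimately obtain w where "(w, v) \<in> arcs_avoiding V A {z}"
    by (meson rtrancl_eq_or_trancl tranclD2)
  then show thesis
    using that unfolding arcs_avoiding_def by blast
qed

lemma contract_arc_in_arcD:
  assumes "(u, v) \<in> contract_arc V A s x"
  shows "(u, v) \<in> A \<and> u \<noteq> x \<or> u = s \<and> (x, v) \<in> A"
  using assms unfolding contract_arc_def arcs_avoiding_def by auto

lemma st_digraph_contract_arc:
  assumes "st_digraph V A s t" and "x \<in> V - {s, t}"
  shows "st_digraph (V - {x}) (contract_arc V A s x) s t"
proof -
  have "y \<in> V - {x, s, t}" if "(x, y) \<in> A" for y
    using assms that unfolding st_digraph_def by fastforce
  then show ?thesis
    using assms unfolding st_digraph_def contract_arc_def arcs_avoiding_def by auto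
qed

text \<open>A path that is cut by the contraction passes through \<open>x\<close>; from there it continues from \<open>s\<close>.\<close>

lemma rtrancl_arcs_avoiding_contract_arc:
  assumes "(q, w) \<in> (arcs_avoiding V A {z})\<^sup>*" and "q \<noteq> x" and "s \<in> V" and "s \<noteq> z" and "s \<noteq> x"
  shows "w = x \<or> (q, w) \<in> (arcs_avoiding (V - {x}) (contract_arc V A s x) {z})\<^sup>* \<or>
    (s, w) \<in> (arcs_avoiding (V - {x}) (contract_arc V A s x) {z})\<^sup>*"
  using assms(1)
proof (induction rule: rtrancl_induct)
  case base
  then show ?case by simp
next
  case (step w w')
  let ?E = "arcs_avoiding (V - {x}) (contract_arc V A s x) {z}"
  have ww': "(w, w') \<in> A" "w \<in> V - {z}" "w' \<in> V - {z}"
    using step.hyps(2) unfolding arcs_avoiding_def by auto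
  show ?case
  proof (cases "w' = x")
    case False
    have "(w, w') \<in> ?E" if "w \<noteq> x"
      using ww' that False unfolding arcs_avoiding_def contract_arc_def by auto
    moreover have "(s, w') \<in> ?E" if "w = x"
      using ww' that False assms(3-5) unfolding arcs_avoiding_def contract_arc_def by auto
    moreover have "w \<noteq> x" if "(q, w) \<in> ?E\<^sup>* \<or> (s, w) \<in> ?E\<^sup>*"
      using that rtrancl_arcs_avoiding_target assms(2,5) by fastforce
    ultimately show ?thesis
      using step.IH by (meson r_into_rtrancl rtrancl.rtrancl_into_rtrancl)
  qed simp
qed

lemma st_two_connected_contract_arc:
  assumes G: "st_digraph V A s t" and C: "st_two_connected V A s t"
    and x: "x \<in> V - {s, t}" and cut: "cut_off V A s t x = {}"
  shows "st_two_connected (V - {x}) (contract_arc V A s x) s t"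
  unfolding st_two_connected_def
proof (intro ballI)
  fix v z
  assume v: "v \<in> V - {x} - {s, t}" and z: "z \<in> V - {x} - {v}"
  let ?E = "arcs_avoiding (V - {x}) (contract_arc V A s x) {z}"
  show "\<exists>q \<in> {s, t} - {z}. (q, v) \<in> ?E\<^sup>*"
  proof (cases "z = s")
    case True
    have "(t, v) \<in> (arcs_avoiding V A {s, x})\<^sup>*"
      using cut v unfolding cut_off_def by auto
    moreover have "arcs_avoiding V A {s, x} \<subseteq> ?E"
      using True unfolding arcs_avoiding_def contract_arc_def by auto
    ultimately have "(t, v) \<in> ?E\<^sup>*" using rtrancl_mono by blast
    then show ?thesis using True G unfolding st_digraph_def by auto
  next
    case False
    have vz: "v \<in> V - {s, t}" "z \<in> V" "z \<noteq> v"
      using v z by auto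
    obtain q where q: "q \<in> {s, t}" "q \<noteq> z" "(q, v) \<in> (arcs_avoiding V A {z})\<^sup>*"
      by (rule st_two_connectedE[OF C vz])
    have "q \<noteq> x" "s \<in> V" "s \<noteq> z" "s \<noteq> x"
      using q(1) x G False unfolding st_digraph_def by auto
    then have "(q, v) \<in> ?E\<^sup>* \<or> (s, v) \<in> ?E\<^sup>*"
      using rtrancl_arcs_avoiding_contract_arc[OF q(3)] v by blast
    then show ?thesis using q(1,2) False by auto
  qed
qed

lemma st_numbering_uncontract:
  assumes G: "st_digraph V A s t" and C: "st_two_connected V A s t"
    and x: "x \<in> V - {s, t}" "(s, x) \<in> A"
    and f: "st_numbering (V - {x}) (contract_arc V A s x) s t f"
  shows "st_numbering V A s t (\<lambda>v. if v = s then 0 else if v = x then 1 else f v + 2)"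
    (is "st_numbering V A s t ?g")
proof -
  have tV: "t \<in> V" and st: "s \<noteq> t"
    using G unfolding st_digraph_def by auto
  have f_inj: "inj_on f (V - {x})" and f_s: "\<forall>v \<in> V - {x} - {s}. f s < f v"
    and f_t: "\<forall>v \<in> V - {x} - {t}. f v < f t"
    and f_lh: "\<forall>v \<in> V - {x} - {s, t}. \<exists>u w. (u, v) \<in> contract_arc V A s x \<and>
      (w, v) \<in> contract_arc V A s x \<and> f u < f v \<and> f v < f w"
    using f unfolding st_numbering_def by auto
  have "inj_on ?g V"
  proof (rule inj_onI)
    fix a b
    assume "a \<in> V" "b \<in> V" "?g a = ?g b"
    then show "a = b"
      using inj_onD[OF f_inj, of a b] by (auto split: if_splits)
  qed
  moreover have "\<forall>v \<in> V - {t}. ?g v < ?g t"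
    using f_t x st tV by auto
  moreover have "\<exists>u w. (u, v) \<in> A \<and> (w, v) \<in> A \<and> ?g u < ?g v \<and> ?g v < ?g w"
    if v: "v \<in> V - {s, t}" for v
  proof (cases "v = x")
    case True
    obtain w where "(w, x) \<in> A" "w \<noteq> s"
      using st_two_connected_in_arc[OF G C x(1) insertI1] .
    moreover have "w \<noteq> x"
      using \<open>(w, x) \<in> A\<close> G unfolding st_digraph_def by auto
    ultimately show ?thesis using True x by (intro exI[of _ s] exI[of _ w]) auto
  next
    case False
    then obtain u w where uw: "(u, v) \<in> contract_arc V A s x" "(w, v) \<in> contract_arc V A s x"
      "f u < f v" "f v < f w"
      using f_lh v by blast
    have "f s < f v"
      using f_s v False by blast
    then have "w \<noteq> s"
      using uw(4) by auto
    then have "(w, v) \<in> A" "?g v < ?g w"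
      using contract_arc_in_arcD[OF uw(2)] uw(4) v False by auto
    moreover have "?g u < ?g v" if "u \<noteq> x"
      using uw(3) v False that by auto
    moreover have "?g x < ?g v"
      using v False by auto
    ultimately show ?thesis
      using contract_arc_in_arcD[OF uw(1)] by blast
  qed
  moreover have "\<forall>v \<in> V - {s}. ?g s < ?g v"
    by simp
  ultimately show ?thesis unfolding st_numbering_def by blast
qed

lemma cut_off_subset:
  assumes G: "st_digraph V A s t" and C: "st_two_connected V A s t"
    and x: "x \<in> V - {s, t}" and y: "y \<in> cut_off V A s t x"
  shows "cut_off V A s t y \<subseteq> cut_off V A s t x"
proof
  fix w
  assume w: "w \<in> cut_off V A s t y"
  have y': "y \<in> V - {s, t, x}" "(t, y) \<notin> (arcs_avoiding V A {s, x})\<^sup>*"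
    using y unfolding cut_off_def by auto
  have w': "w \<in> V - {s, t, y}" "(t, w) \<notin> (arcs_avoiding V A {s, y})\<^sup>*"
    using w unfolding cut_off_def by auto
  have "(t, x) \<in> (arcs_avoiding V A {s})\<^sup>*"
    using st_two_connected_reach_from_t[OF C] G x unfolding st_digraph_def by auto
  then have "(t, x) \<in> (arcs_avoiding V A {y, s})\<^sup>* \<or> (t, y) \<in> (arcs_avoiding V A {x, s})\<^sup>*"
    using rtrancl_arcs_avoiding_one_of_two[of t x V A "{s}" y] x y' by auto
  moreover have "{y, s} = {s, y}" "{x, s} = {s, x}" by auto
  ultimately have "w \<noteq> x"
    using w' y' by force
  moreover have "(t, w) \<notin> (arcs_avoiding V A {s, x})\<^sup>*"
  proof
    assume "(t, w) \<in> (arcs_avoiding V A {s, x})\<^sup>*"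
    then have "(t, w) \<in> (arcs_avoiding V A {y, s, x})\<^sup>*"
      using rtrancl_arcs_avoiding_insert_or_reach[of t w V A "{s, x}" y] y' by auto
    then show False
      using rtrancl_arcs_avoiding_antimono[of "{s, y}" "{y, s, x}"] w' by auto
  qed
  ultimately show "w \<in> cut_off V A s t x"
    using w' unfolding cut_off_def by auto
qed

lemma cut_off_shrinks:
  assumes G: "st_digraph V A s t" and C: "st_two_connected V A s t"
    and x: "x \<in> V - {s, t}" and v: "v \<in> cut_off V A s t x"
  shows "\<exists>y. (s, y) \<in> A \<and> y \<in> V - {s, t} \<and> cut_off V A s t y \<subset> cut_off V A s t x"
proof -
  have nos: "\<forall>u. (u, s) \<notin> A" and not: "\<forall>u. (u, t) \<notin> A"
    using G unfolding st_digraph_def by auto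
  have v': "v \<in> V - {s, t, x}" "(t, v) \<notin> (arcs_avoiding V A {s, x})\<^sup>*"
    using v unfolding cut_off_def by auto
  have vx: "v \<in> V - {s, t}" "x \<in> V" "x \<noteq> v"
    using v' x by auto
  obtain q where q: "q \<in> {s, t}" "q \<noteq> x" "(q, v) \<in> (arcs_avoiding V A {x})\<^sup>*"
    by (rule st_two_connectedE[OF C vx])
  have "q \<noteq> t"
  proof
    assume "q = t"
    moreover have "s \<noteq> t" using G unfolding st_digraph_def by auto
    ultimately have "(t, v) \<in> (arcs_avoiding V A (insert s {x}))\<^sup>*"
      using rtrancl_arcs_avoiding_insert_source[OF nos q(3)] by auto
    then show False using v'(2) by simp
  qed
  then have "(s, v) \<in> (arcs_avoiding V A {x})\<^sup>*" "s \<noteq> v"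
    using q v' by auto
  then obtain y where y: "(s, y) \<in> arcs_avoiding V A {x}" "(y, v) \<in> (arcs_avoiding V A {x})\<^sup>*"
    by (meson rtrancl_eq_or_trancl tranclD)
  have y': "y \<in> V - {s, t, x}" "(s, y) \<in> A"
    using y(1) nos not unfolding arcs_avoiding_def by auto
  have "(y, v) \<in> (arcs_avoiding V A {s, x})\<^sup>*"
    using rtrancl_arcs_avoiding_insert_source[OF nos y(2)] y' by simp
  then have "(t, y) \<notin> (arcs_avoiding V A {s, x})\<^sup>*"
    using v'(2) by (meson rtrancl_trans)
  then have "y \<in> cut_off V A s t x"
    using y' unfolding cut_off_def by auto
  moreover have "y \<notin> cut_off V A s t y"
    unfolding cut_off_def by auto
  ultimately have "cut_off V A s t y \<subset> cut_off V A s t x"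
    using cut_off_subset[OF G C x] by blast
  then show ?thesis using y' by blast
qed

lemma exists_contractible_arc:
  assumes G: "st_digraph V A s t" and C: "st_two_connected V A s t" and "V - {s, t} \<noteq> {}"
  obtains x where "(s, x) \<in> A" and "x \<in> V - {s, t}" and "cut_off V A s t x = {}"
proof -
  let ?X = "\<lambda>x. (s, x) \<in> A \<and> x \<in> V - {s, t}"
  obtain v where v: "v \<in> V - {s, t}" using assms(3) by blast
  then have "(s, v) \<in> (arcs_avoiding V A {t})\<^sup>*"
    using st_two_connected_reach_from_s[OF C] G unfolding st_digraph_def by auto
  moreover have "s \<noteq> v" using v by auto
  ultimately obtain x0 where "(s, x0) \<in> arcs_avoiding V A {t}"
    by (meson rtrancl_eq_or_trancl tranclD)
  then have "?X x0"
    using G unfolding st_digraph_def arcs_avoiding_def by auto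
  then obtain x where x: "?X x" and min: "\<forall>y. ?X y \<longrightarrow> card (cut_off V A s t x) \<le> card (cut_off V A s t y)"
    using ex_has_least_nat[of ?X x0 "\<lambda>y. card (cut_off V A s t y)"] by blast
  have "cut_off V A s t x = {}"
  proof (rule ccontr)
    assume "cut_off V A s t x \<noteq> {}"
    then obtain y where y: "?X y" and "cut_off V A s t y \<subset> cut_off V A s t x"
      using cut_off_shrinks[OF G C] x by blast
    moreover have "finite (cut_off V A s t x)"
      using G unfolding st_digraph_def cut_off_def by auto
    ultimately have "card (cut_off V A s t y) < card (cut_off V A s t x)"
      by (simp add: psubset_card_mono)
    moreover have "card (cut_off V A s t x) \<le> card (cut_off V A s t y)"
      using min y by blast
    ultimately show False by simp
  qed
  then show thesis using x that by blast
qed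

text \<open>Induction on \<open>|V|\<close>, contracting an out-arc \<open>(s, x)\<close> of the first root that keeps the
  digraph \<open>st\<close>-2-connected; \<open>x\<close> is numbered right after \<open>s\<close>.\<close>

theorem st_numbering_exists:
  assumes "st_digraph V A s t" and "st_two_connected V A s t"
  shows "\<exists>f. st_numbering V A s t f"
  using assms
proof (induction "card V" arbitrary: V A rule: less_induct)
  case less
  show ?case
  proof (cases "V - {s, t} = {}")
    case True
    have V: "V = {s, t}" and "s \<noteq> t"
      using True less.prems unfolding st_digraph_def by auto
    let ?f = "\<lambda>v. if v = s then 0 else 1 :: nat"
    have "inj_on ?f V" "\<forall>v \<in> V - {s}. ?f s < ?f v" "\<forall>v \<in> V - {t}. ?f v < ?f t"
      unfolding V inj_on_def using \<open>s \<noteq> t\<close> by auto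
    then have "st_numbering V A s t ?f"
      using True unfolding st_numbering_def by blast
    then show ?thesis by blast
  next
    case False
    obtain x where x: "(s, x) \<in> A" "x \<in> V - {s, t}" "cut_off V A s t x = {}"
      using exists_contractible_arc[OF less.prems False] .
    have "finite V" and "x \<in> V"
      using less.prems(1) x(2) unfolding st_digraph_def by auto
    then have "card (V - {x}) < card V"
      by (rule card_Diff1_less)
    then obtain f where "st_numbering (V - {x}) (contract_arc V A s x) s t f"
      using less.hyps st_digraph_contract_arc[OF less.prems(1) x(2)]
        st_two_connected_contract_arc[OF less.prems x(2,3)] by blast
    then show ?thesis
      using st_numbering_uncontract[OF less.prems x(2,1)] by blast
  qed
qed

lemma two_connected_reach:
  assumes "two_connected V A r" and "S \<subseteq> V - {r}" and "card S \<le> 1" and "v \<in> V - S"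
  shows "(r, v) \<in> (arcs_avoiding V A S)\<^sup>*"
  using assms unfolding two_connected_def is_cut_def by (auto simp: reach_avoiding_iff)

text \<open>\<open>None\<close> is a twin of the root: it has the same out-neighbours and no in-arcs.\<close>

definition twin_root_arcs :: "('a \<times> 'a) set \<Rightarrow> 'a \<Rightarrow> ('a option \<times> 'a option) set" where
  "twin_root_arcs A r = map_prod Some Some ` A \<union> (\<lambda>y. (None, Some y)) ` out_nbrs A r"

lemma st_digraph_twin_root:
  assumes "rooted_digraph V A r"
  shows "st_digraph (insert None (Some ` V)) (twin_root_arcs A r) (Some r) None"
  using assms unfolding rooted_digraph_def st_digraph_def twin_root_arcs_def out_nbrs_def
  by auto

lemma rtrancl_twin_root_arcs:
  assumes "(a, b) \<in> (arcs_avoiding V A Z)\<^sup>*" and "\<forall>w \<in> V. Some w \<in> Z' \<longrightarrow> w \<in> Z"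
  shows "(Some a, Some b) \<in> (arcs_avoiding (insert None (Some ` V)) (twin_root_arcs A r) Z')\<^sup>*"
  using assms(2) by (intro rtrancl_arcs_avoiding_image[OF assms(1)]) (auto simp: twin_root_arcs_def)

text \<open>Replace the first arc \<open>(r, y)\<close> of a path from \<open>r\<close> by the arc \<open>(None, Some y)\<close>.\<close>

lemma twin_root_reaches_avoiding_root:
  assumes rd: "rooted_digraph V A r" and tc: "two_connected V A r" and v: "v \<in> V - {r}"
  shows "(None, Some v) \<in> (arcs_avoiding (insert None (Some ` V)) (twin_root_arcs A r) {Some r})\<^sup>*"
proof -
  have nor: "\<forall>u. (u, r) \<notin> A"
    using rd unfolding rooted_digraph_def by auto
  have "(r, v) \<in> (arcs_avoiding V A {})\<^sup>*" "r \<noteq> v"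
    using two_connected_reach[OF tc] v by auto
  then obtain y where y: "(r, y) \<in> arcs_avoiding V A {}" "(y, v) \<in> (arcs_avoiding V A {})\<^sup>*"
    by (meson rtrancl_eq_or_trancl tranclD)
  have "y \<noteq> r"
    using y(1) nor unfolding arcs_avoiding_def by auto
  then have "(None, Some y) \<in> arcs_avoiding (insert None (Some ` V)) (twin_root_arcs A r) {Some r}"
    using y(1) unfolding arcs_avoiding_def twin_root_arcs_def out_nbrs_def by auto
  moreover have "(y, v) \<in> (arcs_avoiding V A {r})\<^sup>*"
    using rtrancl_arcs_avoiding_insert_source[OF nor y(2)] \<open>y \<noteq> r\<close> by simp
  then have "(Some y, Some v) \<in> (arcs_avoiding (insert None (Some ` V)) (twin_root_arcs A r) {Some r})\<^sup>*"
    by (rule rtrancl_twin_root_arcs) simp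
  ultimately show ?thesis
    by (rule converse_rtrancl_into_rtrancl)
qed

lemma st_two_connected_twin_root:
  assumes rd: "rooted_digraph V A r" and tc: "two_connected V A r"
  shows "st_two_connected (insert None (Some ` V)) (twin_root_arcs A r) (Some r) None"
  unfolding st_two_connected_def
proof (intro ballI)
  let ?V = "insert None (Some ` V)" and ?A = "twin_root_arcs A r"
  fix v z
  assume v: "v \<in> ?V - {Some r, None}" and z: "z \<in> ?V - {v}"
  obtain v0 where v0: "v = Some v0" "v0 \<in> V - {r}"
    using v by auto
  show "\<exists>q \<in> {Some r, None} - {z}. (q, v) \<in> (arcs_avoiding ?V ?A {z})\<^sup>*"
  proof (cases "z = Some r")
    case True
    then show ?thesis
      using twin_root_reaches_avoiding_root[OF rd tc v0(2)] v0(1) by auto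
  next
    case False
    obtain S where S: "S \<subseteq> V - {r}" "card S \<le> 1" "v0 \<in> V - S" "\<forall>w \<in> V. Some w \<in> {z} \<longrightarrow> w \<in> S"
    proof (cases z)
      case None
      then show thesis using that[of "{}"] v0 by auto
    next
      case (Some z0)
      then show thesis using that[of "{z0}"] False z v0 by auto
    qed
    then have "(r, v0) \<in> (arcs_avoiding V A S)\<^sup>*"
      using two_connected_reach[OF tc] by blast
    then have "(Some r, v) \<in> (arcs_avoiding ?V ?A {z})\<^sup>*"
      using rtrancl_twin_root_arcs[OF _ S(4)] v0(1) by blast
    then show ?thesis
      using False by blast
  qed
qed

lemma rooted_low_high_numbering:
  assumes rd: "rooted_digraph V A r" and tc: "two_connected V A r"
  obtains h :: "'a \<Rightarrow> nat" where "inj_on h V" and "\<forall>v \<in> V - {r}. h r < h v"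
    and "\<forall>v \<in> V - {r} - out_nbrs A r. \<exists>u w. (u, v) \<in> A \<and> (w, v) \<in> A \<and> h u < h v \<and> h v < h w"
proof -
  let ?V = "insert None (Some ` V)" and ?A = "twin_root_arcs A r"
  obtain f where f: "st_numbering ?V ?A (Some r) None f"
    using st_numbering_exists[OF st_digraph_twin_root[OF rd] st_two_connected_twin_root[OF rd tc]]
    by blast
  define h where "h v = f (Some v)" for v
  have "inj_on h V"
    using f unfolding st_numbering_def inj_on_def h_def by auto
  moreover have "\<forall>v \<in> V - {r}. h r < h v"
    using f unfolding st_numbering_def h_def by auto
  moreover have "\<exists>u w. (u, v) \<in> A \<and> (w, v) \<in> A \<and> h u < h v \<and> h v < h w"
    if v: "v \<in> V - {r} - out_nbrs A r" for v
  proof -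
    have "Some v \<in> ?V - {Some r, None}"
      using v by auto
    then obtain u w where uw: "(u, Some v) \<in> ?A" "(w, Some v) \<in> ?A" "f u < f (Some v)" "f (Some v) < f w"
      using f unfolding st_numbering_def by blast
    text \<open>Since \<open>v\<close> is not an out-neighbour of \<open>r\<close>, no arc of the twin enters \<open>Some v\<close>.\<close>
    then obtain u' w' where "u = Some u'" "w = Some w'" "(u', v) \<in> A" "(w', v) \<in> A"
      using v unfolding twin_root_arcs_def by auto
    then show ?thesis
      using uw(3,4) unfolding h_def by blast
  qed
  ultimately show thesis
    using that by blast
qed

definition independent_set :: "('a \<times> 'a) set \<Rightarrow> 'a set \<Rightarrow> bool" where
  "independent_set G I \<longleftrightarrow> (\<forall>a \<in> I. \<forall>b \<in> I. (a, b) \<notin> G)"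

lemma independent_set_insert:
  assumes "independent_set G I" and "(x, x) \<notin> G" and "\<forall>b \<in> I. (x, b) \<notin> G \<and> (b, x) \<notin> G"
  shows "independent_set G (insert x I)"
  using assms unfolding independent_set_def by blast

definition caro_wei_bound :: "('a \<times> 'a) set \<Rightarrow> 'a set \<Rightarrow> real" where
  "caro_wei_bound G W = (\<Sum>v \<in> W. 1 / (real (card (G``{v})) + 1))"

lemma caro_wei_bound_delete_closed_nbhd:
  assumes fin: "finite W" and GW: "G \<subseteq> W \<times> W" and irr: "irrefl G" and x: "x \<in> W"
    and min: "\<forall>y \<in> W. card (G``{x}) \<le> card (G``{y})" and S: "S = insert x (G``{x})"
  shows "caro_wei_bound G W \<le> 1 + caro_wei_bound (G \<inter> ((W - S) \<times> (W - S))) (W - S)"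
proof -
  let ?w = "\<lambda>G v. 1 / (real (card (G``{v})) + 1)"
  have img_W: "G``{v} \<subseteq> W" for v
    using GW by auto
  then have fin_x: "finite (G``{x})"
    using fin by (rule finite_subset)
  have SW: "S \<subseteq> W"
    using img_W x unfolding S by auto
  have "x \<notin> G``{x}"
    using irr unfolding irrefl_def by auto
  then have card_S: "card S = card (G``{x}) + 1"
    using fin_x unfolding S by simp
  have "(\<Sum>v \<in> S. ?w G v) \<le> (\<Sum>v \<in> S. ?w G x)"
  proof (rule sum_mono)
    fix v
    assume "v \<in> S"
    then have "card (G``{x}) \<le> card (G``{v})" using min SW by blast
    then show "?w G v \<le> ?w G x" by (simp add: frac_le)
  qed
  also have "\<dots> = 1"
    using card_S by simp
  finally have "(\<Sum>v \<in> S. ?w G v) \<le> 1" .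
  moreover have "(\<Sum>v \<in> W - S. ?w G v) \<le> caro_wei_bound (G \<inter> ((W - S) \<times> (W - S))) (W - S)"
    unfolding caro_wei_bound_def
  proof (rule sum_mono)
    fix v
    have "finite (G``{v})" using img_W fin by (rule finite_subset)
    moreover have "(G \<inter> ((W - S) \<times> (W - S)))``{v} \<subseteq> G``{v}" by auto
    ultimately have "card ((G \<inter> ((W - S) \<times> (W - S)))``{v}) \<le> card (G``{v})" by (rule card_mono)
    then show "?w G v \<le> ?w (G \<inter> ((W - S) \<times> (W - S))) v" by (simp add: frac_le)
  qed
  moreover have "caro_wei_bound G W = (\<Sum>v \<in> S. ?w G v) + (\<Sum>v \<in> W - S. ?w G v)"
    unfolding caro_wei_bound_def using SW fin by (simp add: sum.subset_diff)
  ultimately show ?thesis by linarith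
qed

theorem caro_wei:
  assumes "finite W" and "G \<subseteq> W \<times> W" and "sym G" and "irrefl G"
  shows "\<exists>I \<subseteq> W. independent_set G I \<and> caro_wei_bound G W \<le> card I"
  using assms
proof (induction "card W" arbitrary: W G rule: less_induct)
  case less
  note fin = less.prems(1) and GW = less.prems(2) and sym_G = less.prems(3) and irr = less.prems(4)
  show ?case
  proof (cases "W = {}")
    case True
    then show ?thesis unfolding independent_set_def caro_wei_bound_def by auto
  next
    case False
    then obtain x0 where "x0 \<in> W" by blast
    then obtain x where x: "x \<in> W" and min: "\<forall>y \<in> W. card (G``{x}) \<le> card (G``{y})"
      using ex_has_least_nat[of "\<lambda>y. y \<in> W" x0 "\<lambda>y. card (G``{y})"] by blast
    define S where "S = insert x (G``{x})"
    define W' where "W' = W - S"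
    define G' where "G' = G \<inter> (W' \<times> W')"
    have "x \<in> S" "S \<subseteq> W"
      unfolding S_def using x GW by auto
    then have "W' \<subset> W"
      unfolding W'_def by auto
    with fin have "card W' < card W"
      by (rule psubset_card_mono)
    moreover have "finite W'" "G' \<subseteq> W' \<times> W'"
      using fin unfolding W'_def G'_def by auto
    moreover have "sym G'" "irrefl G'"
      using sym_G irr unfolding G'_def sym_def irrefl_def by auto
    ultimately have "\<exists>I \<subseteq> W'. independent_set G' I \<and> caro_wei_bound G' W' \<le> card I"
      by (rule less.hyps)
    then obtain I' where I': "I' \<subseteq> W'" "independent_set G' I'" "caro_wei_bound G' W' \<le> card I'"
      by blast
    have "independent_set G I'"
      using I'(1,2) unfolding independent_set_def G'_def by auto
    moreover have "(x, x) \<notin> G"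
      using irr unfolding irrefl_def by blast
    moreover have "\<forall>b \<in> I'. (x, b) \<notin> G \<and> (b, x) \<notin> G"
      using I'(1) sym_G unfolding W'_def S_def sym_def by auto
    ultimately have "independent_set G (insert x I')"
      by (rule independent_set_insert)
    moreover have "card (insert x I') = card I' + 1"
    proof -
      have "x \<notin> I'" using I'(1) \<open>x \<in> S\<close> unfolding W'_def by auto
      moreover have "finite I'" using I'(1) \<open>finite W'\<close> by (rule finite_subset)
      ultimately show ?thesis by simp
    qed
    moreover have "caro_wei_bound G W \<le> 1 + caro_wei_bound G' W'"
      using caro_wei_bound_delete_closed_nbhd[OF fin GW irr x min S_def]
      unfolding W'_def G'_def .
    moreover have "insert x I' \<subseteq> W"
      using x I'(1) unfolding W'_def by auto
    ultimately show ?thesis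
      using I'(3) by (intro exI[of _ "insert x I'"]) simp
  qed
qed

text \<open>\<open>2/3 - x/9\<close> is the tangent of \<open>1/x\<close> at \<open>x = 3\<close>.\<close>

lemma inverse_ge_tangent_at_3:
  assumes "(x::real) > 0"
  shows "2/3 - x/9 \<le> 1/x"
proof -
  have "1/x - (2/3 - x/9) = (x - 3)^2 / (9 * x)"
    using assms by (simp add: field_simps power2_eq_square)
  moreover have "(x - 3)^2 / (9 * x) \<ge> 0"
    using assms by simp
  ultimately show ?thesis by linarith
qed

lemma sum_card_Image:
  assumes "finite W" and "G \<subseteq> W \<times> W"
  shows "(\<Sum>v \<in> W. card (G``{v})) = card G"
proof -
  have "finite (G``{v})" for v
    using assms finite_subset[of "G``{v}" W] by auto
  then have "card (Sigma W (\<lambda>v. G``{v})) = (\<Sum>v \<in> W. card (G``{v}))"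
    using assms(1) by (simp add: card_SigmaI)
  moreover have "Sigma W (\<lambda>v. G``{v}) = G"
    using assms(2) by auto
  ultimately show ?thesis by simp
qed

lemma independent_set_third:
  assumes "finite W" and "G \<subseteq> W \<times> W" and "sym G" and "irrefl G" and "card G \<le> 2 * card W"
  shows "\<exists>I \<subseteq> W. independent_set G I \<and> card W \<le> 3 * card I"
proof -
  let ?d = "\<lambda>v. real (card (G``{v}))"
  obtain I where I: "I \<subseteq> W" "independent_set G I" "(\<Sum>v \<in> W. 1 / (?d v + 1)) \<le> card I"
    using caro_wei[OF assms(1-4)] unfolding caro_wei_bound_def by blast
  have "(\<Sum>v \<in> W. 2/3 - (?d v + 1)/9) \<le> (\<Sum>v \<in> W. 1 / (?d v + 1))"
    by (rule sum_mono) (rule inverse_ge_tangent_at_3, simp add: add_pos_nonneg)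
  moreover have "(\<Sum>v \<in> W. 2/3 - (?d v + 1)/9) = 2/3 * card W - (card G + card W) / 9"
  proof -
    have "(\<Sum>v \<in> W. ?d v) = card G"
      using sum_card_Image[OF assms(1,2)] by (metis of_nat_sum)
    then show ?thesis
      by (simp add: sum_subtractf sum_divide_distrib[symmetric] sum.distrib)
  qed
  ultimately have "real (card W) \<le> 3 * card I"
    using I(3) assms(5) by (simp add: field_simps)
  then show ?thesis
    using I(1,2) by (intro exI[of _ I]) simp
qed

text \<open>Choosing a pair of elements in each set \<open>S y\<close> and joining them gives a graph with at
  most \<open>|Y|\<close> edges; an independent set of it contains none of the \<open>S y\<close>.\<close>

lemma exists_third_containing_none:
  assumes "finite W" and "finite Y" and "card Y \<le> card W" and S: "\<forall>y \<in> Y. S y \<subseteq> W \<and> 2 \<le> card (S y)"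
  shows "\<exists>I \<subseteq> W. card W \<le> 3 * card I \<and> (\<forall>y \<in> Y. \<not> S y \<subseteq> I)"
proof -
  have "\<exists>p. fst p \<in> S y \<and> snd p \<in> S y \<and> fst p \<noteq> snd p" if "y \<in> Y" for y
  proof -
    have "finite (S y)" "\<not> card (S y) \<le> Suc 0"
      using S that assms(1) finite_subset by fastforce+
    then obtain a b where "a \<in> S y" "b \<in> S y" "a \<noteq> b"
      using card_le_Suc0_iff_eq by blast
    then show ?thesis by (intro exI[of _ "(a, b)"]) auto
  qed
  then obtain p where p: "\<forall>y \<in> Y. fst (p y) \<in> S y \<and> snd (p y) \<in> S y \<and> fst (p y) \<noteq> snd (p y)"
    by (metis bchoice)
  define G where "G = p ` Y \<union> (p ` Y)\<inverse>"
  have "p ` Y \<subseteq> W \<times> W"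
  proof
    fix e
    assume "e \<in> p ` Y"
    then obtain y where "y \<in> Y" "e = p y" by blast
    then show "e \<in> W \<times> W" using p S unfolding mem_Times_iff by blast
  qed
  then have "G \<subseteq> W \<times> W"
    unfolding G_def by auto
  moreover have "sym G"
    unfolding G_def by (rule sym_Un_converse)
  moreover have "irrefl G"
    unfolding irrefl_def
  proof (intro allI notI)
    fix a
    assume "(a, a) \<in> G"
    then obtain y where "y \<in> Y" "p y = (a, a)" unfolding G_def by auto
    then show False using p by (metis fst_conv snd_conv)
  qed
  moreover have "card G \<le> 2 * card W"
  proof -
    have "card G \<le> card (p ` Y) + card ((p ` Y)\<inverse>)"
      unfolding G_def by (rule card_Un_le)
    also have "\<dots> \<le> 2 * card Y"
      using card_image_le[OF assms(2), of p] card_inverse[of "p ` Y"] by linarith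
    finally show ?thesis using assms(3) by linarith
  qed
  ultimately obtain I where I: "I \<subseteq> W" "independent_set G I" "card W \<le> 3 * card I"
    using independent_set_third[OF assms(1)] by blast
  have "\<not> S y \<subseteq> I" if "y \<in> Y" for y
  proof
    assume "S y \<subseteq> I"
    then have "fst (p y) \<in> I" "snd (p y) \<in> I" using p that by auto
    moreover have "(fst (p y), snd (p y)) \<in> G" using that unfolding G_def by simp
    ultimately show False using I(2) unfolding independent_set_def by blast
  qed
  then show ?thesis using I(1,3) by blast
qed

definition early_in_nbrs :: "('a \<times> 'a) set \<Rightarrow> ('a \<Rightarrow> nat) \<Rightarrow> 'a \<Rightarrow> 'a set" where
  "early_in_nbrs A h v = {u. (u, v) \<in> A \<and> h u < h v}"

lemma outbranching_of_parent:
  assumes AV: "A \<subseteq> V \<times> V" and p: "\<forall>v \<in> V - {r}. p v \<in> early_in_nbrs A h v"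
  shows "outbranching V A r {(p v, v) | v. v \<in> V - {r}}" (is "outbranching V A r ?B")
    and "V - p ` (V - {r}) \<subseteq> leaves V {(p v, v) | v. v \<in> V - {r}}"
proof -
  have "(r, v) \<in> ?B\<^sup>*" if "v \<in> V" for v
    using that
  proof (induction "h v" arbitrary: v rule: less_induct)
    case less
    show ?case
    proof (cases "v = r")
      case False
      then have "(p v, v) \<in> A" "h (p v) < h v"
        using p less.prems unfolding early_in_nbrs_def by auto
      then have "(r, p v) \<in> ?B\<^sup>*"
        using less.hyps AV by blast
      moreover have "(p v, v) \<in> ?B"
        using less.prems False by auto
      ultimately show ?thesis by (rule rtrancl.rtrancl_into_rtrancl)
    qed simp
  qed
  moreover have "{u. (u, v) \<in> ?B} = {p v}" if "v \<in> V - {r}" for v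
    using that by auto
  moreover have "?B \<subseteq> A"
    using p unfolding early_in_nbrs_def by auto
  ultimately show "outbranching V A r ?B"
    unfolding outbranching_def indegree_def by auto
  show "V - p ` (V - {r}) \<subseteq> leaves V ?B"
    unfolding leaves_def out_nbrs_def by auto
qed

lemma card_ge_2_le_card_Diff_small:
  fixes E :: "'a \<Rightarrow> 'a set"
  assumes fin: "finite V" and X: "X \<subseteq> V" and E: "\<forall>v \<in> X. E v \<subseteq> V"
  shows "card {v \<in> X. 2 \<le> card (E v)} \<le> card (V - (\<Union>v \<in> {v \<in> X. card (E v) < 2}. E v))"
proof -
  define M where "M = {v \<in> X. 2 \<le> card (E v)}"
  define U where "U = {v \<in> X. card (E v) < 2}"
  have "finite X"
    using X fin by (rule finite_subset)
  then have fin_UM: "finite U" "finite M"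
    unfolding U_def M_def by auto
  have "card (\<Union>v \<in> U. E v) \<le> (\<Sum>v \<in> U. card (E v))"
    using fin_UM(1) by (rule card_UN_le)
  also have "\<dots> \<le> (\<Sum>v \<in> U. 1)"
    by (rule sum_mono) (simp add: U_def)
  finally have "card (\<Union>v \<in> U. E v) \<le> card U" by simp
  moreover have "card U + card M \<le> card V"
  proof -
    have "U \<inter> M = {}"
      unfolding U_def M_def by auto
    with fin_UM have "card (U \<union> M) = card U + card M"
      by (rule card_Un_disjoint)
    moreover have "card (U \<union> M) \<le> card V"
      using fin X unfolding U_def M_def by (intro card_mono) auto
    ultimately show ?thesis by simp
  qed
  moreover have "card V - card (\<Union>v \<in> U. E v) \<le> card (V - (\<Union>v \<in> U. E v))"
  proof (rule diff_card_le_card_Diff)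
    show "finite (\<Union>v \<in> U. E v)"
      using fin_UM(1) E fin finite_subset unfolding U_def by fastforce
  qed
  ultimately show ?thesis
    unfolding M_def U_def by linarith
qed

text \<open>A singleton \<open>E v\<close> forces its element out of \<open>I\<close>; a third of the other vertices can be
  chosen.\<close>

lemma exists_subset_containing_none:
  fixes E :: "'a \<Rightarrow> 'a set"
  assumes fin: "finite V" and X: "X \<subseteq> V" and E: "\<forall>v \<in> X. E v \<subseteq> V \<and> E v \<noteq> {}"
  obtains I where "I \<subseteq> V" and "card {v \<in> X. 2 \<le> card (E v)} \<le> 3 * card I"
    and "\<forall>v \<in> X. \<not> E v \<subseteq> I"
proof -
  define M where "M = {v \<in> X. 2 \<le> card (E v)}"
  define W where "W = V - (\<Union>v \<in> {v \<in> X. card (E v) < 2}. E v)"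
  define Y where "Y = {y \<in> M. E y \<subseteq> W}"
  have "\<forall>v \<in> X. E v \<subseteq> V"
    using E by blast
  then have card_M: "card M \<le> card W"
    unfolding M_def W_def by (rule card_ge_2_le_card_Diff_small[OF fin X])
  have "finite M"
    using fin X finite_subset unfolding M_def by fastforce
  then have "card Y \<le> card M"
    unfolding Y_def by (intro card_mono) auto
  with card_M have "card Y \<le> card W"
    by linarith
  moreover have "finite W" "finite Y"
    using fin \<open>finite M\<close> unfolding W_def Y_def by auto
  moreover have "\<forall>y \<in> Y. E y \<subseteq> W \<and> 2 \<le> card (E y)"
    unfolding Y_def M_def by auto
  ultimately obtain I where I: "I \<subseteq> W" "card W \<le> 3 * card I" "\<forall>y \<in> Y. \<not> E y \<subseteq> I"
    using exists_third_containing_none[of W Y E] by blast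
  have "\<not> E v \<subseteq> I" if v: "v \<in> X" for v
  proof (cases "2 \<le> card (E v)")
    case False
    then have "card (E v) < 2"
      by simp
    then show ?thesis
      using E v I(1) unfolding W_def by blast
  next
    case True
    then have "v \<in> M"
      using v unfolding M_def by auto
    then show ?thesis
      using I(1,3) unfolding Y_def by blast
  qed
  moreover have "I \<subseteq> V"
    using I(1) unfolding W_def by auto
  ultimately show thesis
    using I(2) card_M unfolding M_def by (intro that) auto
qed

text \<open>Every vertex \<open>v \<noteq> r\<close> takes as parent an earlier in-neighbour outside \<open>I\<close>, so the
  vertices of \<open>I\<close> become leaves.\<close>

lemma outbranching_many_leaves:
  assumes fin: "finite V" and AV: "A \<subseteq> V \<times> V" and early: "\<forall>v \<in> V - {r}. early_in_nbrs A h v \<noteq> {}"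
  shows "\<exists>B. outbranching V A r B \<and>
    card {v \<in> V - {r}. 2 \<le> card (early_in_nbrs A h v)} \<le> 3 * card (leaves V B)"
proof -
  have "early_in_nbrs A h v \<subseteq> V" for v
    using AV unfolding early_in_nbrs_def by auto
  with early have E: "\<forall>v \<in> V - {r}. early_in_nbrs A h v \<subseteq> V \<and> early_in_nbrs A h v \<noteq> {}"
    by blast
  obtain I where I: "I \<subseteq> V" "card {v \<in> V - {r}. 2 \<le> card (early_in_nbrs A h v)} \<le> 3 * card I"
    "\<forall>v \<in> V - {r}. \<not> early_in_nbrs A h v \<subseteq> I"
    using exists_subset_containing_none[OF fin Diff_subset E] .
  then have "\<forall>v \<in> V - {r}. \<exists>u. u \<in> early_in_nbrs A h v \<and> u \<notin> I"
    by blast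
  then obtain p where p: "\<forall>v \<in> V - {r}. p v \<in> early_in_nbrs A h v \<and> p v \<notin> I"
    by (metis bchoice)
  let ?B = "{(p v, v) | v. v \<in> V - {r}}"
  have "I \<subseteq> V - p ` (V - {r})"
    using I(1) p by auto
  then have "I \<subseteq> leaves V ?B"
    using outbranching_of_parent(2)[of A V r p h] AV p by blast
  then have "card I \<le> card (leaves V ?B)"
    using fin unfolding leaves_def by (intro card_mono) auto
  moreover have "outbranching V A r ?B"
    using outbranching_of_parent(1)[of A V r p h] AV p by blast
  ultimately show ?thesis
    using I(2) by (intro exI[of _ ?B]) linarith
qed

lemma card_leaves_le_maxleaf:
  assumes "finite V" and "outbranching V A r B"
  shows "card (leaves V B) \<le> maxleaf V A r"
proof -
  have "{card (leaves V B) | B. outbranching V A r B} \<subseteq> {..card V}"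
    using assms(1) unfolding leaves_def by (auto intro: card_mono)
  then have "finite {card (leaves V B) | B. outbranching V A r B}"
    by (rule finite_subset) simp
  then show ?thesis
    unfolding maxleaf_def using assms(2) by (auto intro: Max_ge)
qed

lemma exists_reversed_numbering:
  fixes h :: "'a \<Rightarrow> nat"
  assumes "finite V"
  obtains h' :: "'a \<Rightarrow> nat" where "\<forall>v \<in> V - {r}. h' r < h' v"
    and "\<forall>u \<in> V - {r}. \<forall>v \<in> V - {r}. h v < h u \<longrightarrow> h' u < h' v"
proof
  let ?h' = "\<lambda>v. if v = r then 0 else Suc (Max (h ` V) - h v)"
  show "\<forall>v \<in> V - {r}. ?h' r < ?h' v"
    by simp
  have "Max (h ` V) - h u < Max (h ` V) - h v" if "u \<in> V" "h v < h u" for u v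
  proof -
    have "h u \<le> Max (h ` V)" using assms that(1) by simp
    then show ?thesis using that(2) by linarith
  qed
  then show "\<forall>u \<in> V - {r}. \<forall>v \<in> V - {r}. h v < h u \<longrightarrow> ?h' u < ?h' v"
    by simp
qed

lemma in_nbrs_subset_early_in_nbrs:
  assumes AV: "A \<subseteq> V \<times> V" and loopless: "\<forall>x. (x, x) \<notin> A" and inj: "inj_on h V"
    and rev: "\<forall>u \<in> V - {r}. \<forall>w \<in> V - {r}. h w < h u \<longrightarrow> h' u < h' w"
    and v: "v \<in> V - {r}" and no_r: "(r, v) \<notin> A"
  shows "{u. (u, v) \<in> A} \<subseteq> early_in_nbrs A h v \<union> early_in_nbrs A h' v"
proof
  fix u
  assume "u \<in> {u. (u, v) \<in> A}"
  then have u: "(u, v) \<in> A" "u \<in> V - {r}" "u \<noteq> v"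
    using AV loopless no_r by auto
  then have "h u \<noteq> h v"
    using inj v inj_onD by fastforce
  then show "u \<in> early_in_nbrs A h v \<union> early_in_nbrs A h' v"
    using rev u v unfolding early_in_nbrs_def by (cases "h u < h v") auto
qed

lemma two_early_in_nbrs_if_indegree_three:
  assumes "finite V" and "A \<subseteq> V \<times> V" and "3 \<le> indegree A v"
    and "{u. (u, v) \<in> A} \<subseteq> early_in_nbrs A h v \<union> early_in_nbrs A h' v"
  shows "2 \<le> card (early_in_nbrs A h v) \<or> 2 \<le> card (early_in_nbrs A h' v)"
proof -
  have "finite (early_in_nbrs A g v)" for g
    using assms(1,2) unfolding early_in_nbrs_def by (auto intro: finite_subset)
  then have "card {u. (u, v) \<in> A} \<le> card (early_in_nbrs A h v \<union> early_in_nbrs A h' v)"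
    using assms(4) by (intro card_mono) auto
  also have "\<dots> \<le> card (early_in_nbrs A h v) + card (early_in_nbrs A h' v)"
    by (rule card_Un_le)
  finally show ?thesis
    using assms(3) unfolding indegree_def by linarith
qed

lemma indegree_ge_2_not_root_nor_out_nbr:
  assumes "rooted_digraph V A r" and "v \<in> V" and "2 \<le> indegree A v"
  shows "v \<in> V - {r} - out_nbrs A r"
proof -
  have "indegree A r = 0"
    using assms(1) unfolding rooted_digraph_def indegree_def by simp
  moreover have "indegree A y = 1" if "y \<in> out_nbrs A r" for y
  proof -
    have "{u. (u, y) \<in> A} = {r}"
      using assms(1) that unfolding rooted_digraph_def out_nbrs_def by auto
    then show ?thesis unfolding indegree_def by simp
  qed
  ultimately have "v \<noteq> r" and "v \<notin> out_nbrs A r"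
    using assms(3) by force+
  then show ?thesis
    using assms(2) by blast
qed

lemma rooted_two_numberings:
  assumes rd: "rooted_digraph V A r" and tc: "two_connected V A r"
  obtains h h' :: "'a \<Rightarrow> nat"
  where "\<forall>v \<in> V - {r}. early_in_nbrs A h v \<noteq> {}" and "\<forall>v \<in> V - {r}. early_in_nbrs A h' v \<noteq> {}"
    and "{v \<in> V. 3 \<le> indegree A v} \<subseteq>
      {v \<in> V - {r}. 2 \<le> card (early_in_nbrs A h v)} \<union> {v \<in> V - {r}. 2 \<le> card (early_in_nbrs A h' v)}"
proof -
  have fin: "finite V" and AV: "A \<subseteq> V \<times> V" and loopless: "\<forall>x. (x, x) \<notin> A"
    using rd unfolding rooted_digraph_def by auto
  obtain h :: "'a \<Rightarrow> nat" where h_inj: "inj_on h V" and h_r: "\<forall>v \<in> V - {r}. h r < h v"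
    and h_lh: "\<forall>v \<in> V - {r} - out_nbrs A r. \<exists>u w. (u, v) \<in> A \<and> (w, v) \<in> A \<and> h u < h v \<and> h v < h w"
    using rooted_low_high_numbering[OF rd tc] .
  obtain h' :: "'a \<Rightarrow> nat" where h'_r: "\<forall>v \<in> V - {r}. h' r < h' v"
    and h'_rev: "\<forall>u \<in> V - {r}. \<forall>v \<in> V - {r}. h v < h u \<longrightarrow> h' u < h' v"
    using exists_reversed_numbering[OF fin, where h = h and r = r] .
  have split: "{u. (u, v) \<in> A} \<subseteq> early_in_nbrs A h v \<union> early_in_nbrs A h' v"
    if "v \<in> V - {r} - out_nbrs A r" for v
    using in_nbrs_subset_early_in_nbrs[OF AV loopless h_inj h'_rev] that
    unfolding out_nbrs_def by blast
  have "early_in_nbrs A h v \<noteq> {} \<and> early_in_nbrs A h' v \<noteq> {}" if v: "v \<in> V - {r}" for v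
  proof (cases "v \<in> out_nbrs A r")
    case True
    then show ?thesis
      using v h_r h'_r unfolding early_in_nbrs_def out_nbrs_def by auto
  next
    case False
    then obtain u w where "(u, v) \<in> A" "(w, v) \<in> A" "h u < h v" "h v < h w"
      using h_lh v by blast
    then have "u \<in> early_in_nbrs A h v" "w \<in> early_in_nbrs A h' v"
      using split[of v] v False unfolding early_in_nbrs_def by auto
    then show ?thesis by blast
  qed
  moreover have "v \<in> {v \<in> V - {r}. 2 \<le> card (early_in_nbrs A h v)} \<union>
    {v \<in> V - {r}. 2 \<le> card (early_in_nbrs A h' v)}" if v: "v \<in> V" "3 \<le> indegree A v" for v
  proof -
    have vN: "v \<in> V - {r} - out_nbrs A r"
      using indegree_ge_2_not_root_nor_out_nbr[OF rd v(1)] v(2) by auto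
    then show ?thesis
      using two_early_in_nbrs_if_indegree_three[OF fin AV v(2) split[OF vN]] by blast
  qed
  ultimately show thesis
    using that by blast
qed

theorem theorem1:
  fixes V :: "'a set" and A :: "('a \<times> 'a) set" and r :: 'a
  assumes "rooted_digraph V A r"
    and "two_connected V A r"
  shows "real (maxleaf V A r) \<ge> real (card {v \<in> V. indegree A v \<ge> 3}) / 6"
proof -
  have fin: "finite V" and AV: "A \<subseteq> V \<times> V"
    using assms(1) unfolding rooted_digraph_def by auto
  obtain h h' where h: "\<forall>v \<in> V - {r}. early_in_nbrs A h v \<noteq> {}"
    and h': "\<forall>v \<in> V - {r}. early_in_nbrs A h' v \<noteq> {}"
    and cover: "{v \<in> V. 3 \<le> indegree A v} \<subseteq>
      {v \<in> V - {r}. 2 \<le> card (early_in_nbrs A h v)} \<union> {v \<in> V - {r}. 2 \<le> card (early_in_nbrs A h' v)}"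
    using rooted_two_numberings[OF assms] .
  let ?M = "\<lambda>g. {v \<in> V - {r}. 2 \<le> card (early_in_nbrs A g v)}"
  obtain B B' where "card (?M h) \<le> 3 * card (leaves V B)" "card (?M h') \<le> 3 * card (leaves V B')"
    and B: "outbranching V A r B" and B': "outbranching V A r B'"
    using outbranching_many_leaves[OF fin AV h] outbranching_many_leaves[OF fin AV h'] by blast
  then have "card (?M h) + card (?M h') \<le> 6 * maxleaf V A r"
    using card_leaves_le_maxleaf[OF fin B] card_leaves_le_maxleaf[OF fin B'] by linarith
  moreover have "card {v \<in> V. 3 \<le> indegree A v} \<le> card (?M h \<union> ?M h')"
    using fin cover by (intro card_mono) auto
  ultimately have "card {v \<in> V. 3 \<le> indegree A v} \<le> 6 * maxleaf V A r"
    using card_Un_le[of "?M h" "?M h'"] by linarith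
  then show ?thesis by simp
qed

end
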